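(* For $i=1,2$ let $\xi_i:[0,1]\to\mathbb{R}$ be a non-random function with continuous first derivative such that $\xi_i'$ vanishes at most on a countable subset of $[0,1]$. Let $a_{i,sh}, a_{i,sc}$ be real random variables with $P(a_{i,sc}=0)=0$, and suppose that for both $i=1,2$ the pair $(a_{i,sh},a_{i,sc})$ has the same given mean $(\mu_{sh},\mu_{sc})$ with $\mu_{sc}\neq 0$. Define $f_i(t)=a_{i,sh}+a_{i,sc}\,\xi_i(t)$, $t\in[0,1]$. Let $h_i$ be a random function on $[0,1]$ which, with probability one, is continuous with strictly positive and continuous first derivative and satisfies $h_i(0)=0$, $h_i(1)=1$, and assume $\mathrm{E}[h_i^{-1}(t)]=t$ for all $t\in[0,1]$. Set $\tilde f_i=f_i\circ h_i$. If $\tilde f_1\overset{d}{=}\tilde f_2$, then $h_1\overset{d}{=}h_2$, $\xi_1=\xi_2$, and $(a_{1,sh},a_{1,sc})\overset{d}{=}(a_{2,sh},a_{2,sc})$.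
   Context: $X_1\overset{d}{=}X_2$ means $X_1$ and $X_2$ have the same distribution. Random functions are regarded as random elements of $C^1[0,1]$ equipped with the metric $d(f,g)=\sup_t|f(t)-g(t)|+\sup_t|f'(t)-g'(t)|$ and its Borel $\sigma$-algebra. $h_i^{-1}$ denotes the inverse function of $h_i$. *)

theory Defs
  imports "HOL-Probability.Probability"
begin

text \<open>Functions on [0,1] are represented as real => real; only their values on [0,1]
  matter, and they are normalised by restriction to [0,1] (FuncSet.restrict).\<close>

definition C1_on :: "(real \<Rightarrow> real) \<Rightarrow> bool" where
  "C1_on f \<longleftrightarrow> (\<exists>f'. continuous_on {0..1} f' \<and>
      (\<forall>t\<in>{0..1}. (f has_real_derivative f' t) (at t within {0..1})))"

definition C1_deriv :: "(real \<Rightarrow> real) \<Rightarrow> real \<Rightarrow> real" where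
  "C1_deriv f t = vector_derivative f (at t within {0..1})"

definition C1_space :: "(real \<Rightarrow> real) set" where
  "C1_space = {f. f \<in> extensional {0..1} \<and> C1_on f}"

definition C1_dist :: "(real \<Rightarrow> real) \<Rightarrow> (real \<Rightarrow> real) \<Rightarrow> real" where
  "C1_dist f g = (SUP t\<in>{0..1}. \<bar>f t - g t\<bar>) + (SUP t\<in>{0..1}. \<bar>C1_deriv f t - C1_deriv g t\<bar>)"

definition C1_open :: "(real \<Rightarrow> real) set \<Rightarrow> bool" where
  "C1_open U \<longleftrightarrow> U \<subseteq> C1_space \<and>
     (\<forall>f\<in>U. \<exists>e>0. \<forall>g\<in>C1_space. C1_dist f g < e \<longrightarrow> g \<in> U)"

definition C1_borel :: "(real \<Rightarrow> real) measure" where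
  "C1_borel = sigma C1_space {U. C1_open U}"

definition C1_rv :: "'a measure \<Rightarrow> ('a \<Rightarrow> real \<Rightarrow> real) \<Rightarrow> bool" where
  "C1_rv M X \<longleftrightarrow> (\<lambda>\<omega>. restrict (X \<omega>) {0..1}) \<in> M \<rightarrow>\<^sub>M C1_borel"

definition C1_eqd :: "'a measure \<Rightarrow> ('a \<Rightarrow> real \<Rightarrow> real) \<Rightarrow> 'b measure \<Rightarrow> ('b \<Rightarrow> real \<Rightarrow> real) \<Rightarrow> bool" where
  "C1_eqd M1 X1 M2 X2 \<longleftrightarrow> C1_rv M1 X1 \<and> C1_rv M2 X2 \<and>
     distr M1 C1_borel (\<lambda>\<omega>. restrict (X1 \<omega>) {0..1}) = distr M2 C1_borel (\<lambda>\<omega>. restrict (X2 \<omega>) {0..1})"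

end

theory Submission
  imports Defs
begin

text \<open>Align a curve \<open>g\<close> by its relative arc length \<open>s\<^sub>g(t) = \<integral>\<^sub>0\<^sup>t \<bar>g'\<bar> / \<integral>\<^sub>0\<^sup>1 \<bar>g'\<bar>\<close>.
  For \<open>g = a + b \<xi> \<circ> h\<close> one has \<open>s\<^sub>g = s\<^sub>\<xi> \<circ> h\<close>, which is strictly increasing because
  \<open>\<xi>'\<close> vanishes only on a countable set; hence the inverse of \<open>s\<^sub>g\<close> at \<open>v\<close> is
  \<open>h\<^sup>-\<^sup>1(s\<^sub>\<xi>\<^sup>-\<^sup>1(v))\<close>. Averaging and using \<open>E h\<^sup>-\<^sup>1 = id\<close>, the law of \<open>g\<close> determines
  \<open>s\<^sub>\<xi>\<^sup>-\<^sup>1\<close>; averaging \<open>g\<close> at the aligned times gives \<open>\<mu>\<^sub>s\<^sub>h + \<mu>\<^sub>s\<^sub>c \<xi> \<circ> s\<^sub>\<xi>\<^sup>-\<^sup>1\<close>,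
  hence \<open>\<xi>\<close>. Then \<open>h = s\<^sub>\<xi>\<^sup>-\<^sup>1 \<circ> s\<^sub>g\<close> and \<open>(a, b)\<close> are measurable functions of \<open>g\<close>, so their
  laws are determined by that of \<open>g\<close>. All these functionals are measurable on \<open>C\<^sup>1[0,1]\<close>
  because, \<open>C\<^sup>1[0,1]\<close> being separable, its Borel sets are generated by point evaluations.\<close>

lemma C1_deriv_eqI:
  assumes "(f has_real_derivative D) (at t within {0..1})" "t \<in> {0..1}"
  shows "C1_deriv f t = D"
  using assms vector_derivative_within_closed_interval[of 0 1 t f D]
  by (simp add: C1_deriv_def has_real_derivative_iff_has_vector_derivative)

lemma C1_onI:
  assumes "continuous_on {0..1} f'"
    and "\<And>t. t \<in> {0..1} \<Longrightarrow> (f has_real_derivative f' t) (at t within {0..1})"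
  shows "C1_on f" and "t \<in> {0..1} \<Longrightarrow> C1_deriv f t = f' t"
  using assms C1_deriv_eqI unfolding C1_on_def by blast+

lemma C1_onD:
  assumes "C1_on f" "t \<in> {0..1}"
  shows "(f has_real_derivative C1_deriv f t) (at t within {0..1})"
proof -
  obtain f' where "\<forall>t\<in>{0..1}. (f has_real_derivative f' t) (at t within {0..1})"
    using assms(1) unfolding C1_on_def by blast
  then have "(f has_real_derivative f' t) (at t within {0..1})" using assms(2) by blast
  with C1_deriv_eqI[OF this assms(2)] show ?thesis by simp
qed

lemma C1_on_continuous_deriv:
  assumes "C1_on f" shows "continuous_on {0..1} (C1_deriv f)"
proof -
  obtain f' where "continuous_on {0..1} f'"
    and "\<forall>t\<in>{0..1}. (f has_real_derivative f' t) (at t within {0..1})"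
    using assms unfolding C1_on_def by blast
  then show ?thesis using C1_deriv_eqI by (metis (no_types, lifting) continuous_on_eq)
qed

lemma C1_on_continuous: "C1_on f \<Longrightarrow> continuous_on {0..1} f"
  by (rule DERIV_continuous_on[OF C1_onD])

lemma C1_on_continuous_diffs:
  assumes "C1_on f" "C1_on g"
  shows "continuous_on {0..1} (\<lambda>t. f t - g t)"
    and "continuous_on {0..1} (\<lambda>t. C1_deriv f t - C1_deriv g t)"
  using assms by (auto intro: continuous_on_diff C1_on_continuous C1_on_continuous_deriv)

lemma C1_on_cong:
  assumes "C1_on f" "\<And>t. t \<in> {0..1} \<Longrightarrow> f t = g t"
  shows "C1_on g" and "t \<in> {0..1} \<Longrightarrow> C1_deriv g t = C1_deriv f t"
proof -
  have "(g has_real_derivative C1_deriv f t) (at t within {0..1})" if "t \<in> {0..1}" for t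
    using has_field_derivative_transform_within[OF C1_onD[OF assms(1) that] zero_less_one that]
      assms(2) by blast
  then show "C1_on g" and "t \<in> {0..1} \<Longrightarrow> C1_deriv g t = C1_deriv f t"
    using C1_onI[OF C1_on_continuous_deriv[OF assms(1)]] by auto
qed

lemma restrict_in_C1_space: "C1_on f \<Longrightarrow> restrict f {0..1} \<in> C1_space"
  using C1_on_cong(1)[of f "restrict f {0..1}"] unfolding C1_space_def by auto

lemma C1_space_imp_C1_on: "f \<in> C1_space \<Longrightarrow> C1_on f"
  unfolding C1_space_def by auto

lemma C1_on_nonconstant:
  assumes "C1_on f" and "countable {t\<in>{0..1}. C1_deriv f t = 0}"
  obtains t where "t \<in> {0..1}" "f t \<noteq> f 0"
proof -
  have "\<exists>t\<in>{0..1}. f t \<noteq> f 0"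
  proof (rule ccontr)
    assume "\<not> (\<exists>t\<in>{0..1}. f t \<noteq> f 0)"
    then have "C1_deriv f t = 0" if "t \<in> {0..1}" for t
      using C1_on_cong(2)[OF assms(1), of "\<lambda>_. f 0"] C1_onI(2)[of "\<lambda>_. 0" "\<lambda>_. f 0"] that
      by (metis DERIV_const continuous_on_const)
    then have "{t\<in>{0..1}. C1_deriv f t = 0} = {0..1::real}" by auto
    then show False using assms(2) uncountable_closed_interval[of 0 "1::real"] by simp
  qed
  then show ?thesis using that by blast
qed

definition sup_norm01 :: "(real \<Rightarrow> real) \<Rightarrow> real" where
  "sup_norm01 u = (SUP t\<in>{0..1}. \<bar>u t\<bar>)"

lemma C1_dist_sup_norm01:
  "C1_dist f g = sup_norm01 (\<lambda>t. f t - g t) + sup_norm01 (\<lambda>t. C1_deriv f t - C1_deriv g t)"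
  unfolding C1_dist_def sup_norm01_def ..

lemma bdd_above_abs_continuous:
  fixes u :: "real \<Rightarrow> real"
  assumes "continuous_on {0..1} u" "A \<subseteq> {0..1}"
  shows "bdd_above ((\<lambda>t. \<bar>u t\<bar>) ` A)"
proof -
  have "compact ((\<lambda>t. \<bar>u t\<bar>) ` {0..1})"
    using assms(1) by (intro compact_continuous_image continuous_on_rabs) auto
  then show ?thesis
    using assms(2) by (meson bdd_above_mono bounded_imp_bdd_above compact_imp_bounded image_mono)
qed

lemma sup_norm01_upper: "continuous_on {0..1} u \<Longrightarrow> t \<in> {0..1} \<Longrightarrow> \<bar>u t\<bar> \<le> sup_norm01 u"
  unfolding sup_norm01_def by (rule cSUP_upper[OF _ bdd_above_abs_continuous]) auto

lemma sup_norm01_least: "(\<And>t. t \<in> {0..1} \<Longrightarrow> \<bar>u t\<bar> \<le> B) \<Longrightarrow> sup_norm01 u \<le> B"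
  unfolding sup_norm01_def by (rule cSUP_least) auto

lemma sup_norm01_nonneg: "continuous_on {0..1} u \<Longrightarrow> 0 \<le> sup_norm01 u"
  using sup_norm01_upper[of u 0] by force

lemma sup_norm01_triangle:
  assumes "continuous_on {0..1} u" "continuous_on {0..1} v"
  shows "sup_norm01 (\<lambda>t. u t + v t) \<le> sup_norm01 u + sup_norm01 v"
proof (rule sup_norm01_least)
  fix t :: real assume "t \<in> {0..1}"
  then show "\<bar>u t + v t\<bar> \<le> sup_norm01 u + sup_norm01 v"
    using sup_norm01_upper[OF assms(1)] sup_norm01_upper[OF assms(2)] abs_triangle_ineq[of "u t" "v t"]
    by fastforce
qed

lemma C1_dist_ge:
  assumes "C1_on f" "C1_on g" "t \<in> {0..1}"
  shows "\<bar>f t - g t\<bar> \<le> C1_dist f g" and "\<bar>C1_deriv f t - C1_deriv g t\<bar> \<le> C1_dist f g"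
  using sup_norm01_upper[OF C1_on_continuous_diffs(1)[OF assms(1,2)] assms(3)]
    sup_norm01_upper[OF C1_on_continuous_diffs(2)[OF assms(1,2)] assms(3)]
    sup_norm01_nonneg[OF C1_on_continuous_diffs(1)[OF assms(1,2)]]
    sup_norm01_nonneg[OF C1_on_continuous_diffs(2)[OF assms(1,2)]]
  unfolding C1_dist_sup_norm01 by linarith+

lemma C1_dist_le:
  assumes "\<And>t. t \<in> {0..1} \<Longrightarrow> \<bar>f t - g t\<bar> \<le> a"
    and "\<And>t. t \<in> {0..1} \<Longrightarrow> \<bar>C1_deriv f t - C1_deriv g t\<bar> \<le> b"
  shows "C1_dist f g \<le> a + b"
  unfolding C1_dist_sup_norm01 using assms by (intro add_mono sup_norm01_least)

lemma C1_dist_sym: "C1_dist f g = C1_dist g f"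
  unfolding C1_dist_def by (simp add: abs_minus_commute)

lemma C1_dist_triangle:
  assumes "C1_on f" "C1_on g" "C1_on h"
  shows "C1_dist f h \<le> C1_dist f g + C1_dist g h"
  using sup_norm01_triangle[OF C1_on_continuous_diffs(1)[OF assms(1,2)] C1_on_continuous_diffs(1)[OF assms(2,3)]]
    sup_norm01_triangle[OF C1_on_continuous_diffs(2)[OF assms(1,2)] C1_on_continuous_diffs(2)[OF assms(2,3)]]
  unfolding C1_dist_sup_norm01 by simp

lemma C1_dist_le_deriv_bound:
  assumes f: "C1_on f" and g: "C1_on g" and a: "\<bar>f 0 - g 0\<bar> \<le> a"
    and b: "\<And>t. t \<in> {0..1} \<Longrightarrow> \<bar>C1_deriv f t - C1_deriv g t\<bar> \<le> b"
  shows "C1_dist f g \<le> a + 2 * b"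
proof -
  have "0 \<le> b" using b[of 0] by force
  have "\<bar>f t - g t\<bar> \<le> a + b" if t: "t \<in> {0..1}" for t
  proof -
    have int: "((\<lambda>x. C1_deriv f x - C1_deriv g x) has_integral (f t - g t) - (f 0 - g 0)) {0..t}"
    proof (rule fundamental_theorem_of_calculus)
      fix x assume "x \<in> {0..t}"
      then have "((\<lambda>x. f x - g x) has_real_derivative C1_deriv f x - C1_deriv g x) (at x within {0..1})"
        using t by (intro DERIV_diff C1_onD f g) auto
      then show "((\<lambda>x. f x - g x) has_vector_derivative C1_deriv f x - C1_deriv g x) (at x within {0..t})"
        using t by (auto simp: has_real_derivative_iff_has_vector_derivative
            intro: has_vector_derivative_within_subset)
    qed (use t in auto)
    have "norm ((f t - g t) - (f 0 - g 0)) \<le> b * measure lborel {0..t}"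
      by (rule has_integral_bound_real[OF \<open>0 \<le> b\<close> finite.emptyI int]) (use b t in auto)
    then have "\<bar>(f t - g t) - (f 0 - g 0)\<bar> \<le> b * t" using t by simp
    moreover have "b * t \<le> b" using t \<open>0 \<le> b\<close> by (simp add: mult_right_le_one_le)
    ultimately show ?thesis using a by linarith
  qed
  then have "C1_dist f g \<le> (a + b) + b" using b by (rule C1_dist_le)
  then show ?thesis by simp
qed

lemma space_C1_borel: "space C1_borel = C1_space"
  unfolding C1_borel_def by (rule space_measure_of) (auto simp: C1_open_def)

lemma sets_C1_borel: "sets C1_borel = sigma_sets C1_space {U. C1_open U}"
  unfolding C1_borel_def by (rule sets_measure_of) (auto simp: C1_open_def)

lemma lipschitz_imp_borel_measurable_C1:
  fixes \<Phi> :: "(real \<Rightarrow> real) \<Rightarrow> real"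
  assumes K: "0 \<le> K"
    and lip: "\<And>f g. f \<in> C1_space \<Longrightarrow> g \<in> C1_space \<Longrightarrow> \<bar>\<Phi> f - \<Phi> g\<bar> \<le> K * C1_dist f g"
  shows "\<Phi> \<in> borel_measurable C1_borel"
proof (rule borel_measurableI)
  fix S :: "real set" assume S: "open S"
  have "C1_open (\<Phi> -` S \<inter> C1_space)"
    unfolding C1_open_def
  proof (intro conjI ballI)
    fix f assume f: "f \<in> \<Phi> -` S \<inter> C1_space"
    then obtain e where e: "e > 0" "\<forall>y. dist y (\<Phi> f) < e \<longrightarrow> y \<in> S"
      using S unfolding open_dist by blast
    show "\<exists>e>0. \<forall>g\<in>C1_space. C1_dist f g < e \<longrightarrow> g \<in> \<Phi> -` S \<inter> C1_space"
    proof (intro exI[of _ "e / (K + 1)"] conjI ballI impI)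
      fix g assume g: "g \<in> C1_space" "C1_dist f g < e / (K + 1)"
      have "\<bar>\<Phi> g - \<Phi> f\<bar> \<le> K * C1_dist f g" using lip[OF g(1)] f by (simp add: C1_dist_sym)
      also have "\<dots> \<le> K * (e / (K + 1))" using g(2) K by (intro mult_left_mono) auto
      also have "\<dots> < e" using K e by (simp add: field_simps)
      finally show "g \<in> \<Phi> -` S \<inter> C1_space" using e g by (auto simp: dist_real_def)
    qed (use e K in simp)
  qed auto
  then show "\<Phi> -` S \<inter> space C1_borel \<in> sets C1_borel"
    unfolding space_C1_borel sets_C1_borel by (rule sigma_sets.Basic[OF CollectI])
qed

lemma C1_borel_measurable_eval:
  assumes "t \<in> {0..1}" shows "(\<lambda>f. f t) \<in> borel_measurable C1_borel"
  using assms C1_dist_ge(1) C1_space_imp_C1_on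
  by (intro lipschitz_imp_borel_measurable_C1[of 1]) auto

subsection \<open>Cylinder sets generate the Borel sets of \<open>C\<^sup>1[0,1]\<close>\<close>

definition unit_rats :: "real set" where
  "unit_rats = \<rat> \<inter> {0..1}"

lemma countable_unit_rats: "countable unit_rats"
  unfolding unit_rats_def by (rule countable_Int1[OF countable_rat])

lemma unit_rats_subset: "unit_rats \<subseteq> {0..1}"
  unfolding unit_rats_def by auto

lemma zero_in_unit_rats: "0 \<in> unit_rats"
  unfolding unit_rats_def by auto

lemma unit_rats_dense:
  assumes "t \<in> {0..1}" "d > 0"
  obtains q where "q \<in> unit_rats" "\<bar>q - t\<bar> < d"
proof (cases "t = 0")
  case True then show ?thesis using that zero_in_unit_rats assms(2) by auto
next
  case False
  obtain q where "q \<in> \<rat>" "max 0 (t - d) < q" "q < t"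
    using Rats_dense_in_real[of "max 0 (t - d)" t] False assms by auto
  then show ?thesis using assms(1) by (intro that[of q]) (auto simp: unit_rats_def)
qed

lemma sup_norm01_unit_rats:
  fixes u :: "real \<Rightarrow> real"
  assumes u: "continuous_on {0..1} u"
  shows "sup_norm01 u = (SUP t\<in>unit_rats. \<bar>u t\<bar>)"
proof (rule antisym)
  have bdd: "bdd_above ((\<lambda>t. \<bar>u t\<bar>) ` unit_rats)"
    by (rule bdd_above_abs_continuous[OF u unit_rats_subset])
  show "(SUP t\<in>unit_rats. \<bar>u t\<bar>) \<le> sup_norm01 u"
    using sup_norm01_upper[OF u] unit_rats_subset zero_in_unit_rats by (intro cSUP_least) auto
  show "sup_norm01 u \<le> (SUP t\<in>unit_rats. \<bar>u t\<bar>)"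
  proof (rule sup_norm01_least, rule ccontr)
    fix t :: real assume t: "t \<in> {0..1}" and "\<not> \<bar>u t\<bar> \<le> (SUP t\<in>unit_rats. \<bar>u t\<bar>)"
    then have gap: "\<bar>u t\<bar> - (SUP t\<in>unit_rats. \<bar>u t\<bar>) > 0" by simp
    obtain d where "d > 0"
      and d: "\<forall>x\<in>{0..1}. dist x t < d \<longrightarrow> dist (u x) (u t) < \<bar>u t\<bar> - (SUP t\<in>unit_rats. \<bar>u t\<bar>)"
      using u t gap unfolding continuous_on_iff by blast
    obtain q where q: "q \<in> unit_rats" "\<bar>q - t\<bar> < d" using unit_rats_dense[OF t \<open>d > 0\<close>] .
    have "\<bar>u q\<bar> > (SUP t\<in>unit_rats. \<bar>u t\<bar>)"
      using d q unit_rats_subset by (force simp: dist_real_def)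
    then show False using cSUP_upper[OF q(1) bdd] by simp
  qed
qed

definition cylinder :: "(real \<times> real) list \<Rightarrow> (real \<Rightarrow> real) set" where
  "cylinder ps = {g\<in>C1_space. \<forall>p\<in>set ps. g (fst p) \<le> snd p}"

definition cylinders :: "(real \<Rightarrow> real) set set" where
  "cylinders = {cylinder ps | ps. \<forall>p\<in>set ps. fst p \<in> {0..1}}"

definition C1_cyl :: "(real \<Rightarrow> real) measure" where
  "C1_cyl = sigma C1_space cylinders"

lemma cylinders_subset: "cylinders \<subseteq> Pow C1_space"
  unfolding cylinders_def cylinder_def by auto

lemma space_C1_cyl: "space C1_cyl = C1_space"
  unfolding C1_cyl_def using cylinders_subset by (rule space_measure_of)

lemma sets_C1_cyl: "sets C1_cyl = sigma_sets C1_space cylinders"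
  unfolding C1_cyl_def using cylinders_subset by (rule sets_measure_of)

lemma Int_stable_cylinders: "Int_stable cylinders"
proof (rule Int_stableI)
  fix A B assume "A \<in> cylinders" "B \<in> cylinders"
  then obtain ps qs where "A = cylinder ps" "\<forall>p\<in>set ps. fst p \<in> {0..1}"
    and "B = cylinder qs" "\<forall>p\<in>set qs. fst p \<in> {0..1}"
    unfolding cylinders_def by auto
  moreover have "cylinder ps \<inter> cylinder qs = cylinder (ps @ qs)"
    unfolding cylinder_def by auto
  ultimately show "A \<inter> B \<in> cylinders"
    unfolding cylinders_def by (intro CollectI exI[of _ "ps @ qs"]) auto
qed

lemma C1_space_in_cylinders: "C1_space \<in> cylinders"
  unfolding cylinders_def cylinder_def by (intro CollectI exI[of _ "[]"]) simp

lemma C1_cyl_measurable_eval: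
  assumes "t \<in> {0..1}" shows "(\<lambda>g. g t) \<in> borel_measurable C1_cyl"
proof (rule borel_measurableI_le)
  fix c
  have "{g \<in> space C1_cyl. g t \<le> c} = cylinder [(t, c)]"
    unfolding cylinder_def space_C1_cyl by auto
  moreover have "cylinder [(t, c)] \<in> cylinders"
    unfolding cylinders_def using assms by auto
  ultimately show "{g \<in> space C1_cyl. g t \<le> c} \<in> sets C1_cyl"
    unfolding sets_C1_cyl by auto
qed

definition approach_seq :: "real \<Rightarrow> nat \<Rightarrow> real" where
  "approach_seq t n = (if t \<le> 1/2 then t + 1 / real (n + 2) else t - 1 / real (n + 2))"

lemma approach_seq:
  assumes t: "t \<in> {0..1}"
  shows "approach_seq t n \<in> {0..1}" "approach_seq t n \<noteq> t" "approach_seq t \<longlonglongrightarrow> t"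
proof -
  define d where "d = 1 / real (n + 2)"
  have "d \<le> 1/2" "d > 0" unfolding d_def by (simp_all add: field_simps)
  moreover have "approach_seq t n = (if t \<le> 1/2 then t + d else t - d)"
    unfolding approach_seq_def d_def ..
  ultimately show "approach_seq t n \<in> {0..1}" "approach_seq t n \<noteq> t"
    using t by auto
  have "(\<lambda>n. 1 / real (Suc (Suc n))) \<longlonglongrightarrow> 0"
    using LIMSEQ_Suc[OF LIMSEQ_Suc[OF lim_const_over_n[of 1]]] by simp
  then have "(\<lambda>n. 1 / real (n + 2)) \<longlonglongrightarrow> 0" by simp
  from tendsto_add[OF tendsto_const this, of t] tendsto_diff[OF tendsto_const this, of t]
  show "approach_seq t \<longlonglongrightarrow> t"
    unfolding approach_seq_def[abs_def] by (cases "t \<le> 1/2") simp_all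
qed

lemma C1_cyl_measurable_eval_deriv:
  assumes t: "t \<in> {0..1}" shows "(\<lambda>g. C1_deriv g t) \<in> borel_measurable C1_cyl"
proof (rule borel_measurable_LIMSEQ_real)
  fix n
  have [measurable]: "(\<lambda>g. g (approach_seq t n)) \<in> borel_measurable C1_cyl" "(\<lambda>g. g t) \<in> borel_measurable C1_cyl"
    using approach_seq(1)[OF t] t by (simp_all add: C1_cyl_measurable_eval)
  show "(\<lambda>g. (g (approach_seq t n) - g t) / (approach_seq t n - t)) \<in> borel_measurable C1_cyl"
    by measurable
next
  fix g assume "g \<in> space C1_cyl"
  then have "((\<lambda>y. (g y - g t) / (y - t)) \<longlongrightarrow> C1_deriv g t) (at t within {0..1})"
    using C1_onD[OF _ t] by (simp add: space_C1_cyl C1_space_imp_C1_on has_field_derivative_iff)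
  moreover have "filterlim (approach_seq t) (at t within {0..1}) sequentially"
    unfolding filterlim_at using approach_seq[OF t] by auto
  ultimately show "(\<lambda>n. (g (approach_seq t n) - g t) / (approach_seq t n - t)) \<longlonglongrightarrow> C1_deriv g t"
    by (rule filterlim_compose)
qed

lemma C1_cyl_measurable_sup_norm01:
  assumes D: "\<And>t. t \<in> unit_rats \<Longrightarrow> (\<lambda>g. D g t) \<in> borel_measurable C1_cyl"
    and cont: "\<And>g. g \<in> C1_space \<Longrightarrow> continuous_on {0..1} (D g)"
  shows "(\<lambda>g. sup_norm01 (D g)) \<in> borel_measurable C1_cyl"
proof -
  have "(\<lambda>g. SUP t\<in>unit_rats. \<bar>D g t\<bar>) \<in> borel_measurable C1_cyl"
    using D cont bdd_above_abs_continuous[OF _ unit_rats_subset]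
    by (intro borel_measurable_cSUP[OF countable_unit_rats]) (auto simp: space_C1_cyl)
  then show ?thesis
    by (rule measurable_cong[THEN iffD1, rotated])
      (simp add: space_C1_cyl sup_norm01_unit_rats[OF cont])
qed

lemma C1_cyl_measurable_dist:
  assumes q: "q \<in> C1_space"
  shows "(\<lambda>g. C1_dist q g) \<in> borel_measurable C1_cyl"
  unfolding C1_dist_sup_norm01
proof (rule borel_measurable_add; rule C1_cyl_measurable_sup_norm01)
  fix t assume "t \<in> unit_rats"
  then have t: "t \<in> {0..1}" using unit_rats_subset by auto
  show "(\<lambda>g. q t - g t) \<in> borel_measurable C1_cyl"
    and "(\<lambda>g. C1_deriv q t - C1_deriv g t) \<in> borel_measurable C1_cyl"
    using C1_cyl_measurable_eval[OF t] C1_cyl_measurable_eval_deriv[OF t] by simp_all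
next
  fix g assume "g \<in> C1_space"
  then show "continuous_on {0..1} (\<lambda>t. q t - g t)"
    and "continuous_on {0..1} (\<lambda>t. C1_deriv q t - C1_deriv g t)"
    using q by (simp_all add: C1_on_continuous_diffs C1_space_imp_C1_on)
qed

lemma C1_open_in_C1_cyl:
  assumes D: "countable D" "D \<subseteq> C1_space" "\<And>f e. f \<in> C1_space \<Longrightarrow> e > 0 \<Longrightarrow> \<exists>q\<in>D. C1_dist f q < e"
    and U: "C1_open U"
  shows "U \<in> sets C1_cyl"
proof -
  define ball where "ball = (\<lambda>(q, r). {g\<in>C1_space. C1_dist q g < r})"
  define J where "J = {(q, r). q \<in> D \<and> r \<in> \<rat> \<and> ball (q, r) \<subseteq> U}"
  have "U \<subseteq> \<Union>(ball ` J)"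
  proof
    fix f assume f: "f \<in> U"
    then obtain e where "e > 0" and e: "\<forall>g\<in>C1_space. C1_dist f g < e \<longrightarrow> g \<in> U"
      and fs: "f \<in> C1_space"
      using U unfolding C1_open_def by blast
    obtain q where q: "q \<in> D" "C1_dist f q < e/3" using D(3)[OF fs, of "e/3"] \<open>e > 0\<close> by auto
    obtain r where r: "r \<in> \<rat>" "e/3 < r" "r < 2*e/3"
      using Rats_dense_in_real[of "e/3" "2*e/3"] \<open>e > 0\<close> by auto
    have "ball (q, r) \<subseteq> U"
    proof
      fix g assume "g \<in> ball (q, r)"
      then have g: "g \<in> C1_space" "C1_dist q g < r" unfolding ball_def by auto
      have "C1_dist f g \<le> C1_dist f q + C1_dist q g"
        using fs g q D(2) by (intro C1_dist_triangle) (auto intro: C1_space_imp_C1_on)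
      then show "g \<in> U" using e g q r by auto
    qed
    moreover have "f \<in> ball (q, r)" unfolding ball_def using fs q r C1_dist_sym[of q f] by auto
    ultimately show "f \<in> \<Union>(ball ` J)" unfolding J_def using q r by auto
  qed
  then have "U = \<Union>(ball ` J)" unfolding J_def by auto
  moreover have "countable J"
    by (rule countable_subset[of _ "D \<times> \<rat>"]) (use D(1) countable_rat in \<open>auto simp: J_def\<close>)
  moreover have "ball x \<in> sets C1_cyl" if "x \<in> J" for x
  proof -
    obtain q r where x: "x = (q, r)" by (cases x)
    then have "q \<in> C1_space" using that D(2) unfolding J_def by auto
    then have "(\<lambda>g. C1_dist q g) -` {..<r} \<inter> space C1_cyl \<in> sets C1_cyl"
      by (intro measurable_sets[OF C1_cyl_measurable_dist]) auto
    moreover have "(\<lambda>g. C1_dist q g) -` {..<r} \<inter> space C1_cyl = ball x"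
      unfolding x ball_def space_C1_cyl by auto
    ultimately show ?thesis by simp
  qed
  ultimately show ?thesis by (auto intro!: sets.countable_UN'')
qed
definition bernstein_comb :: "nat \<Rightarrow> real list \<Rightarrow> real \<Rightarrow> real" where
  "bernstein_comb n r x = (\<Sum>k\<le>n. r!k * Bernstein n k x)"

lemma continuous_on_bernstein_comb: "continuous_on S (bernstein_comb n r)"
  unfolding bernstein_comb_def[abs_def] Bernstein_def by (intro continuous_intros)

lemma bernstein_comb_rat_approx:
  fixes F :: "real \<Rightarrow> real"
  assumes F: "continuous_on {0..1} F" and e: "e > 0"
  shows "\<exists>n r. r \<in> lists \<rat> \<and> (\<forall>x\<in>{0..1}. \<bar>F x - bernstein_comb n r x\<bar> \<le> e)"
proof -
  obtain N where N: "\<And>x. x \<in> {0..1} \<Longrightarrow> \<bar>F x - (\<Sum>k\<le>N. F (k/N) * Bernstein N k x)\<bar> < e/2"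
    using Bernstein_Weierstrass[OF F, of "e/2"] e by auto
  have "\<forall>k::nat. \<exists>q. q \<in> \<rat> \<and> \<bar>q - F (k/N)\<bar> < e/2"
  proof
    fix k :: nat
    obtain q where "q \<in> \<rat>" "F (k/N) - e/2 < q" "q < F (k/N)"
      using Rats_dense_in_real[of "F (k/N) - e/2" "F (k/N)"] e by auto
    then show "\<exists>q. q \<in> \<rat> \<and> \<bar>q - F (k/N)\<bar> < e/2" by (intro exI[of _ q]) auto
  qed
  from choice[OF this] obtain rk where rk: "\<And>k::nat. rk k \<in> \<rat>" "\<And>k::nat. \<bar>rk k - F (k/N)\<bar> < e/2"
    by blast
  define r where "r = map rk [0..<Suc N]"
  have bound: "\<bar>F x - bernstein_comb N r x\<bar> \<le> e" if x: "x \<in> {0..1}" for x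
  proof -
    have B: "0 \<le> Bernstein N k x" for k using x by (intro Bernstein_nonneg) auto
    have "\<bar>(\<Sum>k\<le>N. F (k/N) * Bernstein N k x) - bernstein_comb N r x\<bar>
        = \<bar>\<Sum>k\<le>N. (F (k/N) - rk k) * Bernstein N k x\<bar>"
      unfolding bernstein_comb_def r_def by (simp add: sum_subtractf[symmetric] algebra_simps del: upt_Suc)
    also have "\<dots> \<le> (\<Sum>k\<le>N. e/2 * Bernstein N k x)"
    proof (intro order.trans[OF sum_abs] sum_mono)
      fix k assume "k \<in> {..N}"
      have "\<bar>F (k/N) - rk k\<bar> \<le> e/2" using rk(2)[of k] by (simp add: abs_minus_commute)
      from mult_right_mono[OF this B[of k]] show "\<bar>(F (k/N) - rk k) * Bernstein N k x\<bar> \<le> e/2 * Bernstein N k x"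
        by (simp add: abs_mult B)
    qed
    also have "\<dots> = e/2" by (simp only: sum_distrib_left[symmetric] sum_Bernstein mult_1_right)
    finally have "\<bar>(\<Sum>k\<le>N. F (k/N) * Bernstein N k x) - bernstein_comb N r x\<bar> \<le> e/2" .
    then show ?thesis
      using N[OF x] abs_triangle_ineq[of "F x - (\<Sum>k\<le>N. F (k/N) * Bernstein N k x)"
          "(\<Sum>k\<le>N. F (k/N) * Bernstein N k x) - bernstein_comb N r x"] by simp
  qed
  moreover have "r \<in> lists \<rat>" using rk(1) by (auto simp: r_def)
  ultimately show ?thesis by blast
qed

text \<open>A countable dense family: rational value at \<open>0\<close> and, as derivative, a Bernstein polynomial
  with rational coefficients.\<close>

definition rat_C1 :: "real \<Rightarrow> nat \<Rightarrow> real list \<Rightarrow> real \<Rightarrow> real" where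
  "rat_C1 c n r = restrict (\<lambda>t. c + integral {0..t} (bernstein_comb n r)) {0..1}"

lemma rat_C1:
  shows "rat_C1 c n r \<in> C1_space" and "rat_C1 c n r 0 = c"
    and "t \<in> {0..1} \<Longrightarrow> C1_deriv (rat_C1 c n r) t = bernstein_comb n r t"
proof -
  have "((\<lambda>t. c + integral {0..t} (bernstein_comb n r)) has_real_derivative bernstein_comb n r t)
      (at t within {0..1})" if "t \<in> {0..1}" for t
    using DERIV_add[OF DERIV_const integral_has_real_derivative[OF continuous_on_bernstein_comb that]]
    by simp
  note C1 = C1_onI[OF continuous_on_bernstein_comb this]
  show "rat_C1 c n r \<in> C1_space" unfolding rat_C1_def by (rule restrict_in_C1_space[OF C1(1)])
  show "rat_C1 c n r 0 = c" by (simp add: rat_C1_def)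
  show "t \<in> {0..1} \<Longrightarrow> C1_deriv (rat_C1 c n r) t = bernstein_comb n r t"
    unfolding rat_C1_def using C1_on_cong(2)[OF C1(1), of "restrict _ {0..1}"] C1(2) by simp
qed

lemma C1_space_separable:
  "\<exists>D. countable D \<and> D \<subseteq> C1_space \<and> (\<forall>f\<in>C1_space. \<forall>e>0. \<exists>q\<in>D. C1_dist f q < e)"
proof (intro exI conjI ballI allI impI)
  define D where "D = (\<lambda>(c, n, r). rat_C1 c n r) ` (\<rat> \<times> UNIV \<times> lists \<rat>)"
  show "countable D" unfolding D_def
    by (intro countable_image countable_SIGMA countable_rat countable_lists countableI_type)
  show "D \<subseteq> C1_space" unfolding D_def using rat_C1(1) by auto
  fix f and e :: real assume f: "f \<in> C1_space" and "e > 0"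
  from f have "C1_on f" by (rule C1_space_imp_C1_on)
  have "e/4 > 0" using \<open>e > 0\<close> by simp
  obtain n r where r: "r \<in> lists \<rat>"
    and approx: "\<forall>x\<in>{0..1}. \<bar>C1_deriv f x - bernstein_comb n r x\<bar> \<le> e/4"
    using bernstein_comb_rat_approx[OF C1_on_continuous_deriv[OF \<open>C1_on f\<close>] \<open>e/4 > 0\<close>] by blast
  obtain c where c: "c \<in> \<rat>" "f 0 - e/4 < c" "c < f 0"
    using Rats_dense_in_real[of "f 0 - e/4" "f 0"] \<open>e > 0\<close> by auto
  have "C1_dist f (rat_C1 c n r) \<le> e/4 + 2 * (e/4)"
    by (rule C1_dist_le_deriv_bound[OF \<open>C1_on f\<close> C1_space_imp_C1_on[OF rat_C1(1)]])
      (use c approx rat_C1(2,3) in auto)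
  moreover have "rat_C1 c n r \<in> D"
    unfolding D_def using c(1) r by (intro image_eqI[of _ _ "(c, n, r)"]) auto
  ultimately show "\<exists>q\<in>D. C1_dist f q < e" using \<open>e > 0\<close> by (intro bexI[of _ "rat_C1 c n r"]) auto
qed

lemma cylinder_in_sets_C1_borel:
  assumes "\<forall>p\<in>set ps. fst p \<in> {0..1}"
  shows "cylinder ps \<in> sets C1_borel"
  using assms
proof (induction ps)
  case Nil
  then show ?case unfolding cylinder_def by (simp flip: space_C1_borel)
next
  case (Cons p ps)
  have "(\<lambda>g. g (fst p)) -` {..snd p} \<inter> space C1_borel \<in> sets C1_borel"
    using Cons.prems by (intro measurable_sets[OF C1_borel_measurable_eval]) auto
  moreover have "cylinder (p # ps) = ((\<lambda>g. g (fst p)) -` {..snd p} \<inter> space C1_borel) \<inter> cylinder ps"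
    unfolding cylinder_def space_C1_borel by auto
  ultimately show ?case using Cons by auto
qed

lemma sets_C1_borel_cylinders: "sets C1_borel = sigma_sets C1_space cylinders"
proof
  obtain D where D: "countable D" "D \<subseteq> C1_space"
    "\<And>f e. f \<in> C1_space \<Longrightarrow> e > 0 \<Longrightarrow> \<exists>q\<in>D. C1_dist f q < e"
    using C1_space_separable by blast
  show "sets C1_borel \<subseteq> sigma_sets C1_space cylinders"
    unfolding sets_C1_borel
    by (rule sigma_sets_mono) (use C1_open_in_C1_cyl[OF D] sets_C1_cyl in auto)
  show "sigma_sets C1_space cylinders \<subseteq> sets C1_borel"
    unfolding sets_C1_borel
    by (rule sigma_sets_mono) (use cylinder_in_sets_C1_borel sets_C1_borel in \<open>auto simp: cylinders_def\<close>)
qed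

subsection \<open>Strict monotonicity from the derivative\<close>

lemma strict_mono_on_DERIV_pos:
  fixes f :: "real \<Rightarrow> real"
  assumes deriv: "\<And>t. t \<in> {a..b} \<Longrightarrow> (f has_real_derivative f' t) (at t within {a..b})"
    and pos: "\<And>t. t \<in> {a..b} \<Longrightarrow> f' t > 0"
  shows "strict_mono_on {a..b} f"
proof (rule strict_mono_onI)
  fix x y assume xy: "x \<in> {a..b}" "y \<in> {a..b}" "x < y"
  show "f x < f y"
  proof (rule DERIV_pos_imp_increasing_open[OF \<open>x < y\<close>])
    fix z assume "x < z" "z < y"
    then have "(f has_real_derivative f' z) (at z)" "f' z > 0"
      using deriv[of z] pos[of z] at_within_Icc_at[of a z b] xy by auto
    then show "\<exists>D. (f has_real_derivative D) (at z) \<and> 0 < D" by blast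
  next
    show "continuous_on {x..y} f"
      using DERIV_continuous_on[OF deriv] xy by (auto elim!: continuous_on_subset)
  qed
qed

lemma strict_mono_on_DERIV_nonneg_countable:
  fixes f :: "real \<Rightarrow> real"
  assumes deriv: "\<And>t. t \<in> {a..b} \<Longrightarrow> (f has_real_derivative f' t) (at t within {a..b})"
    and nonneg: "\<And>t. t \<in> {a..b} \<Longrightarrow> f' t \<ge> 0" and countable: "countable {t\<in>{a..b}. f' t = 0}"
  shows "strict_mono_on {a..b} f"
proof -
  have cont: "continuous_on {a..b} f" using DERIV_continuous_on[OF deriv] .
  have deriv_at: "(f has_real_derivative f' z) (at z)" if "a < z" "z < b" for z
    using deriv[of z] at_within_Icc_at[of a z b] that by auto
  have mono: "f x \<le> f y" if "a \<le> x" "x \<le> y" "y \<le> b" for x y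
    using that nonneg deriv_at
    by (intro DERIV_nonneg_imp_increasing_open[OF \<open>x \<le> y\<close>])
      (fastforce, auto intro: continuous_on_subset[OF cont])
  show ?thesis
  proof (rule strict_mono_onI, rule ccontr)
    fix x y assume xy: "x \<in> {a..b}" "y \<in> {a..b}" "x < y" and "\<not> f x < f y"
    then have const: "f z = f x" if "z \<in> {x<..<y}" for z
      using mono[of x z] mono[of z y] that by fastforce
    have "f' z = 0" if z: "z \<in> {x<..<y}" for z
    proof -
      have "((\<lambda>_. f x) has_real_derivative 0) (at z)" by simp
      then have "(f has_real_derivative 0) (at z)"
        by (rule has_field_derivative_transform_within_open[of _ _ _ "{x<..<y}"]) (use z const in auto)
      then show ?thesis using DERIV_unique deriv_at[of z] z xy by auto
    qed
    then have "{x<..<y} \<subseteq> {t\<in>{a..b}. f' t = 0}" using xy by auto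
    then show False
      using countable_subset[OF _ countable] uncountable_open_interval[of x y] \<open>x < y\<close> by auto
  qed
qed

subsection \<open>A generalised inverse that depends measurably on the function\<close>

text \<open>Only the values of \<open>S\<close> at rational points enter, so \<open>ginv S v\<close> is a countable supremum of
  measurable functions of \<open>S\<close>; for strictly increasing \<open>S\<close> it is the inverse of \<open>S\<close> on its range.\<close>

definition ginv :: "(real \<Rightarrow> real) \<Rightarrow> real \<Rightarrow> real" where
  "ginv S v = (SUP q\<in>unit_rats. if S q < v then q else 0)"

lemma bdd_above_ginv: "bdd_above ((\<lambda>q. if S q < v then q else 0) ` unit_rats)"
  by (rule bdd_aboveI[of _ 1]) (auto simp: unit_rats_def)

lemma ginv_range: "ginv S v \<in> {0..1}"
proof -
  have "ginv S v \<le> 1" unfolding ginv_def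
    using zero_in_unit_rats by (intro cSUP_least) (auto simp: unit_rats_def)
  moreover have "(if S 0 < v then 0 else 0) \<le> ginv S v" unfolding ginv_def
    by (rule cSUP_upper[OF zero_in_unit_rats bdd_above_ginv])
  ultimately show ?thesis by simp
qed

lemma ginv_eqI:
  assumes S: "strict_mono_on {0..1} S" and x: "x \<in> {0..1}"
  shows "ginv S (S x) = x"
proof (rule antisym)
  show "ginv S (S x) \<le> x" unfolding ginv_def
  proof (rule cSUP_least)
    fix q assume q: "q \<in> unit_rats"
    then have "S q < S x \<Longrightarrow> q < x"
      using strict_mono_onD[OF S, of x q] x unit_rats_subset by (cases x q rule: linorder_cases) auto
    then show "(if S q < S x then q else 0) \<le> x" using x by auto
  qed (use zero_in_unit_rats in auto)
  show "x \<le> ginv S (S x)"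
  proof (rule dense_le)
    fix y assume "y < x"
    show "y \<le> ginv S (S x)"
    proof (cases "y < 0")
      case True
      then show ?thesis using ginv_range[of S "S x"] by simp
    next
      case False
      then obtain q where q: "q \<in> \<rat>" "y < q" "q < x"
        using Rats_dense_in_real[of y x] \<open>y < x\<close> by auto
      then have "q \<in> unit_rats" using x False by (auto simp: unit_rats_def)
      moreover have "S q < S x" using strict_mono_onD[OF S, of q x] q x False by auto
      ultimately have "q \<le> ginv S (S x)"
        unfolding ginv_def using cSUP_upper[OF _ bdd_above_ginv, of q S "S x"] by simp
      then show ?thesis using q by simp
    qed
  qed
qed

lemma ginv_cong: "(\<And>q. q \<in> unit_rats \<Longrightarrow> S q = S' q) \<Longrightarrow> ginv S = ginv S'"
  unfolding ginv_def[abs_def] by (intro ext SUP_cong) auto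

lemma borel_measurable_ginv_param:
  assumes "\<And>q. q \<in> unit_rats \<Longrightarrow> (\<lambda>x. S x q) \<in> borel_measurable M"
  shows "(\<lambda>x. ginv (S x) v) \<in> borel_measurable M"
  unfolding ginv_def
proof (rule borel_measurable_cSUP[OF countable_unit_rats])
  fix q assume "q \<in> unit_rats"
  then have [measurable]: "(\<lambda>x. S x q) \<in> borel_measurable M" by (rule assms)
  show "(\<lambda>x. if S x q < v then q else 0) \<in> borel_measurable M" by measurable
qed (rule bdd_above_ginv)

lemma borel_measurable_ginv: "ginv S \<in> borel_measurable borel"
  unfolding ginv_def[abs_def]
proof (rule borel_measurable_cSUP[OF countable_unit_rats])
  show "(\<lambda>v. if S q < v then q else 0) \<in> borel_measurable borel" for q by measurable
qed (rule bdd_above_ginv)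

subsection \<open>Relative arc length\<close>

definition arclen :: "(real \<Rightarrow> real) \<Rightarrow> real \<Rightarrow> real" where
  "arclen g t = integral {0..t} (\<lambda>x. \<bar>C1_deriv g x\<bar>)"

definition rel_arclen :: "(real \<Rightarrow> real) \<Rightarrow> real \<Rightarrow> real" where
  "rel_arclen g t = arclen g t / arclen g 1"

lemma arclen_0 [simp]: "arclen g 0 = 0"
  by (simp add: arclen_def)

lemma arclen_has_real_derivative:
  assumes "C1_on g" "t \<in> {0..1}"
  shows "(arclen g has_real_derivative \<bar>C1_deriv g t\<bar>) (at t within {0..1})"
  unfolding arclen_def[abs_def]
  by (rule integral_has_real_derivative[OF continuous_on_rabs[OF C1_on_continuous_deriv[OF assms(1)]] assms(2)])

lemma arclen_lipschitz:
  assumes f: "C1_on f" and g: "C1_on g" and t: "t \<in> {0..1}"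
  shows "\<bar>arclen f t - arclen g t\<bar> \<le> C1_dist f g"
proof -
  have int: "(\<lambda>x. \<bar>C1_deriv h x\<bar>) integrable_on {0..t}" if "C1_on h" for h
    using continuous_on_rabs[OF C1_on_continuous_deriv[OF that]] t
    by (intro integrable_continuous_interval) (auto elim: continuous_on_subset)
  have diff: "((\<lambda>x. \<bar>C1_deriv f x\<bar> - \<bar>C1_deriv g x\<bar>) has_integral arclen f t - arclen g t) {0..t}"
    unfolding arclen_def by (intro has_integral_diff integrable_integral int f g)
  have bound: "norm (\<bar>C1_deriv f x\<bar> - \<bar>C1_deriv g x\<bar>) \<le> C1_dist f g" if "x \<in> {0..t} - {}" for x
  proof -
    have "x \<in> {0..1}" using that t by auto
    then show ?thesis
      using abs_triangle_ineq3[of "C1_deriv f x" "C1_deriv g x"] C1_dist_ge(2)[OF f g] by fastforce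
  qed
  have "0 \<le> C1_dist f g" using C1_dist_ge(1)[OF f g, of 0] by force
  have "norm (arclen f t - arclen g t) \<le> C1_dist f g * measure lborel {0..t}"
    by (rule has_integral_bound_real[OF \<open>0 \<le> C1_dist f g\<close> finite.emptyI diff bound])
  also have "\<dots> \<le> C1_dist f g"
    using t \<open>0 \<le> C1_dist f g\<close> by (simp add: mult_right_le_one_le)
  finally show ?thesis by simp
qed

lemma C1_borel_measurable_rel_arclen:
  assumes "t \<in> {0..1}" shows "(\<lambda>g. rel_arclen g t) \<in> borel_measurable C1_borel"
proof -
  have arclen: "(\<lambda>g. arclen g s) \<in> borel_measurable C1_borel" if "s \<in> {0..1}" for s
    using arclen_lipschitz C1_space_imp_C1_on that
    by (intro lipschitz_imp_borel_measurable_C1[of 1]) auto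
  show ?thesis
    unfolding rel_arclen_def using arclen[OF assms] arclen[of 1] by (intro borel_measurable_divide) auto
qed

locale template =
  fixes \<xi> :: "real \<Rightarrow> real"
  assumes C1: "C1_on \<xi>" and countable_critical: "countable {t\<in>{0..1}. C1_deriv \<xi> t = 0}"
begin

lemma strict_mono_arclen: "strict_mono_on {0..1} (arclen \<xi>)"
  using arclen_has_real_derivative[OF C1] countable_critical
  by (intro strict_mono_on_DERIV_nonneg_countable[where f' = "\<lambda>t. \<bar>C1_deriv \<xi> t\<bar>"]) auto

lemma arclen_1_pos: "arclen \<xi> 1 > 0"
  using strict_mono_onD[OF strict_mono_arclen, of 0 1] by simp

lemma strict_mono_rel_arclen: "strict_mono_on {0..1} (rel_arclen \<xi>)"
  using strict_mono_arclen arclen_1_pos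
  by (auto simp: rel_arclen_def strict_mono_on_def monotone_on_def divide_strict_right_mono)

lemma rel_arclen_range: "x \<in> {0..1} \<Longrightarrow> rel_arclen \<xi> x \<in> {0..1}"
  using strict_mono_on_leD[OF strict_mono_rel_arclen, of 0 x] strict_mono_on_leD[OF strict_mono_rel_arclen, of x 1]
    arclen_1_pos by (auto simp: rel_arclen_def)

lemma ginv_rel_arclen: "x \<in> {0..1} \<Longrightarrow> ginv (rel_arclen \<xi>) (rel_arclen \<xi> x) = x"
  by (rule ginv_eqI[OF strict_mono_rel_arclen])

lemma rel_arclen_ginv:
  assumes v: "v \<in> {0..1}"
  shows "ginv (rel_arclen \<xi>) v \<in> {0..1}" and "rel_arclen \<xi> (ginv (rel_arclen \<xi>) v) = v"
proof -
  have "continuous_on {0..1} (rel_arclen \<xi>)"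
    unfolding rel_arclen_def[abs_def]
    using DERIV_continuous_on[OF arclen_has_real_derivative[OF C1]] arclen_1_pos
    by (intro continuous_intros) auto
  then obtain x where x: "x \<in> {0..1}" "rel_arclen \<xi> x = v"
    using IVT'[of "rel_arclen \<xi>" 0 v 1] v arclen_1_pos by (auto simp: rel_arclen_def)
  then show "ginv (rel_arclen \<xi>) v \<in> {0..1}" and "rel_arclen \<xi> (ginv (rel_arclen \<xi>) v) = v"
    using ginv_rel_arclen by auto
qed

end

lemma grid_approx:
  fixes x :: real
  assumes x: "x \<in> {0..1}"
  shows "nat \<lfloor>real (Suc n) * x\<rfloor> \<le> Suc n"
    and "(\<lambda>n. real (nat \<lfloor>real (Suc n) * x\<rfloor>) / real (Suc n)) \<longlonglongrightarrow> x"
proof -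
  have nonneg: "0 \<le> \<lfloor>real (Suc n) * x\<rfloor>" for n using x by simp
  have "\<lfloor>real (Suc n) * x\<rfloor> \<le> \<lfloor>real (Suc n)\<rfloor>"
    using x by (intro floor_mono) (simp add: mult_left_le_one_le)
  then show "nat \<lfloor>real (Suc n) * x\<rfloor> \<le> Suc n" by simp
  have lower: "x - inverse (real (Suc n)) \<le> real (nat \<lfloor>real (Suc n) * x\<rfloor>) / real (Suc n)" for n
  proof -
    have "real (Suc n) * x - 1 \<le> real (nat \<lfloor>real (Suc n) * x\<rfloor>)"
      using nonneg[of n] by linarith
    then have "(real (Suc n) * x - 1) / real (Suc n) \<le> real (nat \<lfloor>real (Suc n) * x\<rfloor>) / real (Suc n)"
      by (intro divide_right_mono) auto
    moreover have "(real (Suc n) * x - 1) / real (Suc n) = x - inverse (real (Suc n))"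
      by (simp add: field_simps)
    ultimately show ?thesis by simp
  qed
  have upper: "real (nat \<lfloor>real (Suc n) * x\<rfloor>) / real (Suc n) \<le> x" for n
  proof -
    have "real (nat \<lfloor>real (Suc n) * x\<rfloor>) \<le> real (Suc n) * x"
      using nonneg[of n] by linarith
    then show ?thesis by (simp add: divide_le_eq mult.commute)
  qed
  show "(\<lambda>n. real (nat \<lfloor>real (Suc n) * x\<rfloor>) / real (Suc n)) \<longlonglongrightarrow> x"
  proof (rule tendsto_sandwich[of "\<lambda>n. x - inverse (real (Suc n))" _ _ "\<lambda>n. x"])
    have "(\<lambda>n. x - inverse (real (Suc n))) \<longlonglongrightarrow> x - 0"
      by (intro tendsto_diff tendsto_const LIMSEQ_inverse_real_of_nat)
    then show "(\<lambda>n. x - inverse (real (Suc n))) \<longlonglongrightarrow> x" by simp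
  qed (use lower upper in simp_all)
qed

lemma C1_borel_measurable_eval_at:
  assumes X[measurable]: "X \<in> borel_measurable C1_borel"
    and range: "\<And>g. g \<in> C1_space \<Longrightarrow> X g \<in> {0..1}"
  shows "(\<lambda>g. g (X g)) \<in> borel_measurable C1_borel"
proof (rule borel_measurable_LIMSEQ_real)
  txt \<open>Rounding \<open>X g\<close> down to the grid \<open>k / (n+1)\<close> leaves only finitely many evaluation points.\<close>
  define u where "u n g = (\<Sum>k\<le>Suc n. if nat \<lfloor>real (Suc n) * X g\<rfloor> = k then g (real k / real (Suc n)) else 0)"
    for n g
  show "u n \<in> borel_measurable C1_borel" for n
  proof -
    have [measurable]: "(\<lambda>g. g (real k / real (Suc n))) \<in> borel_measurable C1_borel" if "k \<le> Suc n" for k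
      using that by (intro C1_borel_measurable_eval) auto
    show ?thesis unfolding u_def by (intro borel_measurable_sum) measurable
  qed
  fix g assume "g \<in> space C1_borel"
  then have g: "g \<in> C1_space" and x: "X g \<in> {0..1}" using range by (auto simp: space_C1_borel)
  have "u n g = g (real (nat \<lfloor>real (Suc n) * X g\<rfloor>) / real (Suc n))" for n
    unfolding u_def using grid_approx(1)[OF x, of n] by (simp add: sum.delta')
  moreover have "(\<lambda>n. g (real (nat \<lfloor>real (Suc n) * X g\<rfloor>) / real (Suc n))) \<longlonglongrightarrow> g (X g)"
  proof (rule continuous_on_tendsto_compose[OF C1_on_continuous[OF C1_space_imp_C1_on[OF g]] grid_approx(2)[OF x] x])
    have "real (nat \<lfloor>real (Suc n) * X g\<rfloor>) / real (Suc n) \<in> {0..1}" for n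
      using grid_approx(1)[OF x, of n] by simp
    then show "\<forall>\<^sub>F n in sequentially. real (nat \<lfloor>real (Suc n) * X g\<rfloor>) / real (Suc n) \<in> {0..1}"
      by simp
  qed
  ultimately show "(\<lambda>n. u n g) \<longlonglongrightarrow> g (X g)" by simp
qed

subsection \<open>Warped templates\<close>

locale warping_function =
  fixes h :: "real \<Rightarrow> real"
  assumes C1: "C1_on h" and deriv_pos: "\<And>t. t \<in> {0..1} \<Longrightarrow> C1_deriv h t > 0"
    and zero: "h 0 = 0" and one: "h 1 = 1"
begin

lemma strict_mono: "strict_mono_on {0..1} h"
  using C1_onD[OF C1] deriv_pos by (rule strict_mono_on_DERIV_pos)

lemma maps_to: "x \<in> {0..1} \<Longrightarrow> h x \<in> {0..1}"
  using strict_mono_on_leD[OF strict_mono, of 0 x] strict_mono_on_leD[OF strict_mono, of x 1] zero one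
  by auto

lemma bij: "bij_betw h {0..1} {0..1}"
proof (rule bij_betw_imageI)
  show "inj_on h {0..1}" by (rule strict_mono_on_imp_inj_on[OF strict_mono])
  have "y \<in> h ` {0..1}" if "y \<in> {0..1}" for y
    using IVT'[of h 0 y 1] that zero one C1_on_continuous[OF C1] by force
  then show "h ` {0..1} = {0..1}" using maps_to by auto
qed

lemma inv_into:
  assumes "y \<in> {0..1}"
  shows "inv_into {0..1} h y \<in> {0..1}" and "h (inv_into {0..1} h y) = y"
  using assms bij bij_betw_inv_into_right inv_into_into bij_betw_imp_surj_on by metis+

end

locale warped_template = warp: warping_function h + template \<xi> for h \<xi> +
  fixes a b :: real
  assumes scale_nonzero: "b \<noteq> 0"
begin

abbreviation warped :: "real \<Rightarrow> real" where
  "warped \<equiv> restrict (\<lambda>t. a + b * \<xi> (h t)) {0..1}"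

lemma warped_has_real_derivative:
  assumes t: "t \<in> {0..1}"
  shows "(warped has_real_derivative b * (C1_deriv \<xi> (h t) * C1_deriv h t)) (at t within {0..1})"
proof -
  have "h ` {0..1} \<subseteq> {0..1}" using warp.maps_to by auto
  from DERIV_image_chain[OF DERIV_subset[OF C1_onD[OF C1 warp.maps_to[OF t]] this] C1_onD[OF warp.C1 t]]
  have "((\<lambda>t. a + b * \<xi> (h t)) has_real_derivative b * (C1_deriv \<xi> (h t) * C1_deriv h t))
      (at t within {0..1})"
    using DERIV_add[OF DERIV_const DERIV_cmult] by (simp add: o_def)
  then show ?thesis
    by (rule has_field_derivative_transform_within[OF _ zero_less_one t]) simp
qed

lemma C1_warped:
  shows "C1_on warped" and "t \<in> {0..1} \<Longrightarrow> C1_deriv warped t = b * (C1_deriv \<xi> (h t) * C1_deriv h t)"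
proof -
  have "continuous_on {0..1} (\<lambda>t. C1_deriv \<xi> (h t))"
    using warp.maps_to
    by (intro continuous_on_compose2[OF C1_on_continuous_deriv[OF C1] C1_on_continuous[OF warp.C1]]) auto
  then have "continuous_on {0..1} (\<lambda>t. b * (C1_deriv \<xi> (h t) * C1_deriv h t))"
    using C1_on_continuous_deriv[OF warp.C1] by (intro continuous_intros)
  from C1_onI[OF this warped_has_real_derivative]
  show "C1_on warped" and "t \<in> {0..1} \<Longrightarrow> C1_deriv warped t = b * (C1_deriv \<xi> (h t) * C1_deriv h t)"
    by auto
qed

lemma arclen_warped:
  assumes t: "t \<in> {0..1}"
  shows "arclen warped t = \<bar>b\<bar> * arclen \<xi> (h t)"
proof -
  define W where "W x = \<bar>b\<bar> * arclen \<xi> (h x)" for x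
  have deriv: "(W has_real_derivative \<bar>C1_deriv warped x\<bar>) (at x within {0..1})" if x: "x \<in> {0..1}" for x
  proof -
    have "h ` {0..1} \<subseteq> {0..1}" using warp.maps_to by auto
    from DERIV_image_chain[OF DERIV_subset[OF arclen_has_real_derivative[OF C1 warp.maps_to[OF x]] this]
        C1_onD[OF warp.C1 x]]
    have "(W has_real_derivative \<bar>b\<bar> * (\<bar>C1_deriv \<xi> (h x)\<bar> * C1_deriv h x)) (at x within {0..1})"
      unfolding W_def using DERIV_cmult by (simp add: o_def)
    moreover have "\<bar>C1_deriv warped x\<bar> = \<bar>b\<bar> * (\<bar>C1_deriv \<xi> (h x)\<bar> * C1_deriv h x)"
      using C1_warped(2)[OF x] warp.deriv_pos[OF x] by (simp add: abs_mult)
    ultimately show ?thesis by simp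
  qed
  have "((\<lambda>x. \<bar>C1_deriv warped x\<bar>) has_integral W t - W 0) {0..t}"
  proof (rule fundamental_theorem_of_calculus)
    fix x assume "x \<in> {0..t}"
    then have "x \<in> {0..1}" using t by auto
    from deriv[OF this] show "(W has_vector_derivative \<bar>C1_deriv warped x\<bar>) (at x within {0..t})"
      unfolding has_real_derivative_iff_has_vector_derivative
      by (rule has_vector_derivative_within_subset) (use t in auto)
  qed (use t in auto)
  then show ?thesis
    unfolding arclen_def W_def using warp.zero by (simp add: integral_unique)
qed

lemma rel_arclen_warped: "t \<in> {0..1} \<Longrightarrow> rel_arclen warped t = rel_arclen \<xi> (h t)"
  unfolding rel_arclen_def using arclen_warped[of t] arclen_warped[of 1] warp.one scale_nonzero by simp

lemma ginv_rel_arclen_warped: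
  assumes v: "v \<in> {0..1}"
  shows "ginv (rel_arclen warped) v = inv_into {0..1} h (ginv (rel_arclen \<xi>) v)"
proof -
  define x where "x = inv_into {0..1} h (ginv (rel_arclen \<xi>) v)"
  have x: "x \<in> {0..1}" "h x = ginv (rel_arclen \<xi>) v"
    unfolding x_def using warp.inv_into rel_arclen_ginv(1)[OF v] by auto
  have "strict_mono_on {0..1} (rel_arclen warped)"
    using strict_mono_onD[OF strict_mono_rel_arclen] strict_mono_onD[OF warp.strict_mono] warp.maps_to
    by (intro strict_mono_onI) (simp add: rel_arclen_warped)
  moreover have "rel_arclen warped x = v"
    using rel_arclen_warped[OF x(1)] x(2) rel_arclen_ginv(2)[OF v] by simp
  ultimately show ?thesis using ginv_eqI x(1) unfolding x_def by metis
qed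

lemma warped_ginv_rel_arclen:
  assumes v: "v \<in> {0..1}"
  shows "warped (ginv (rel_arclen warped) v) = a + b * \<xi> (ginv (rel_arclen \<xi>) v)"
  using warp.inv_into[OF rel_arclen_ginv(1)[OF v]] by (simp add: ginv_rel_arclen_warped[OF v])

lemma ginv_rel_arclen_recovers_warping:
  "t \<in> {0..1} \<Longrightarrow> ginv (rel_arclen \<xi>) (rel_arclen warped t) = h t"
  using rel_arclen_warped ginv_rel_arclen warp.maps_to by simp

end

subsection \<open>Transferring equality in distribution\<close>

lemma integral_eq_of_distr_eq:
  fixes G :: "'c \<Rightarrow> real"
  assumes F1: "F1 \<in> M1 \<rightarrow>\<^sub>M N" and F2: "F2 \<in> M2 \<rightarrow>\<^sub>M N" and eq: "distr M1 N F1 = distr M2 N F2"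
    and G: "G \<in> borel_measurable N"
  shows "(\<integral>\<omega>. G (F1 \<omega>) \<partial>M1) = (\<integral>\<omega>. G (F2 \<omega>) \<partial>M2)"
  using integral_distr[OF F1 G] integral_distr[OF F2 G] eq by simp

lemma distr_eq_of_ae_function:
  assumes F1: "F1 \<in> M1 \<rightarrow>\<^sub>M N" and F2: "F2 \<in> M2 \<rightarrow>\<^sub>M N" and eq: "distr M1 N F1 = distr M2 N F2"
    and \<Theta>: "\<Theta> \<in> N \<rightarrow>\<^sub>M K" and X1: "X1 \<in> M1 \<rightarrow>\<^sub>M K" and X2: "X2 \<in> M2 \<rightarrow>\<^sub>M K"
    and rep1: "AE \<omega> in M1. X1 \<omega> = \<Theta> (F1 \<omega>)" and rep2: "AE \<omega> in M2. X2 \<omega> = \<Theta> (F2 \<omega>)"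
  shows "distr M1 K X1 = distr M2 K X2"
proof -
  have "distr M K X = distr (distr M N F) K \<Theta>"
    if F: "F \<in> M \<rightarrow>\<^sub>M N" and X: "X \<in> M \<rightarrow>\<^sub>M K" and rep: "AE \<omega> in M. X \<omega> = \<Theta> (F \<omega>)" for M F X
  proof -
    have "distr M K X = distr M K (\<Theta> \<circ> F)"
      using rep X measurable_comp[OF F \<Theta>] by (intro distr_cong_AE) (auto simp: o_def)
    then show ?thesis using distr_distr[OF \<Theta> F] by simp
  qed
  then show ?thesis using F1 F2 X1 X2 rep1 rep2 eq by metis
qed

lemma C1_borel_measure_eqI_cylinders:
  assumes sets: "sets P = sets C1_borel" "sets Q = sets C1_borel" and fin: "emeasure P C1_space \<noteq> \<infinity>"
    and cyl: "\<And>ps. \<forall>p\<in>set ps. fst p \<in> {0..1} \<Longrightarrow> emeasure P (cylinder ps) = emeasure Q (cylinder ps)"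
  shows "P = Q"
proof (rule measure_eqI_generator_eq[OF Int_stable_cylinders cylinders_subset, where A = "\<lambda>_. C1_space"])
  show "sets P = sigma_sets C1_space cylinders" "sets Q = sigma_sets C1_space cylinders"
    using sets sets_C1_borel_cylinders by simp_all
  show "X \<in> cylinders \<Longrightarrow> emeasure P X = emeasure Q X" for X
    using cyl unfolding cylinders_def by auto
qed (use C1_space_in_cylinders fin in auto)

lemma emeasure_distr_cylinder_of_ae_eval_function:
  assumes ps: "\<forall>p\<in>set ps. fst p \<in> {0..1}" and X: "C1_rv M X" and F: "F \<in> M \<rightarrow>\<^sub>M N"
    and \<Phi>: "\<And>t. t \<in> {0..1} \<Longrightarrow> \<Phi> t \<in> borel_measurable N"
    and rep: "AE \<omega> in M. \<forall>t\<in>{0..1}. X \<omega> t = \<Phi> t (F \<omega>)"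
  shows "emeasure (distr M C1_borel (\<lambda>\<omega>. restrict (X \<omega>) {0..1})) (cylinder ps)
    = emeasure (distr M N F) {g\<in>space N. \<forall>p\<in>set ps. \<Phi> (fst p) g \<le> snd p}"
proof -
  let ?X = "\<lambda>\<omega>. restrict (X \<omega>) {0..1}"
  let ?B = "{g\<in>space N. \<forall>p\<in>set ps. \<Phi> (fst p) g \<le> snd p}"
  have Xm: "?X \<in> M \<rightarrow>\<^sub>M C1_borel" using X unfolding C1_rv_def .
  have "{g\<in>space N. \<Phi> (fst p) g \<le> snd p} \<in> sets N" if "p \<in> set ps" for p
    using measurable_sets[OF \<Phi>, of "fst p" "{..snd p}"] ps that by (auto simp: vimage_def Int_def conj_commute)
  then have B: "?B \<in> sets N" by (intro sets.sets_Collect_finite_All) auto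
  have "emeasure (distr M C1_borel ?X) (cylinder ps) = emeasure M (?X -` cylinder ps \<inter> space M)"
    by (rule emeasure_distr[OF Xm cylinder_in_sets_C1_borel[OF ps]])
  also have "\<dots> = emeasure M (F -` ?B \<inter> space M)"
  proof (rule emeasure_eq_AE)
    show "AE \<omega> in M. (\<omega> \<in> ?X -` cylinder ps \<inter> space M) = (\<omega> \<in> F -` ?B \<inter> space M)"
      using rep
    proof eventually_elim
      case (elim \<omega>)
      show ?case
      proof (cases "\<omega> \<in> space M")
        case True
        then show ?thesis
          using elim ps measurable_space[OF Xm True] measurable_space[OF F True]
          unfolding cylinder_def space_C1_borel by auto
      qed simp
    qed
  qed (use measurable_sets[OF Xm cylinder_in_sets_C1_borel[OF ps]] measurable_sets[OF F B] in auto)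
  also have "\<dots> = emeasure (distr M N F) ?B"
    by (rule emeasure_distr[OF F B, symmetric])
  finally show ?thesis .
qed

lemma C1_eqd_of_ae_eval_function:
  assumes prob: "prob_space M1"
    and X1: "C1_rv M1 X1" and X2: "C1_rv M2 X2"
    and F1: "F1 \<in> M1 \<rightarrow>\<^sub>M N" and F2: "F2 \<in> M2 \<rightarrow>\<^sub>M N" and eq: "distr M1 N F1 = distr M2 N F2"
    and \<Phi>: "\<And>t. t \<in> {0..1} \<Longrightarrow> \<Phi> t \<in> borel_measurable N"
    and rep1: "AE \<omega> in M1. \<forall>t\<in>{0..1}. X1 \<omega> t = \<Phi> t (F1 \<omega>)"
    and rep2: "AE \<omega> in M2. \<forall>t\<in>{0..1}. X2 \<omega> t = \<Phi> t (F2 \<omega>)"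
  shows "C1_eqd M1 X1 M2 X2"
proof -
  have "distr M1 C1_borel (\<lambda>\<omega>. restrict (X1 \<omega>) {0..1}) = distr M2 C1_borel (\<lambda>\<omega>. restrict (X2 \<omega>) {0..1})"
  proof (rule C1_borel_measure_eqI_cylinders)
    have "prob_space (distr M1 C1_borel (\<lambda>\<omega>. restrict (X1 \<omega>) {0..1}))"
      using prob_space.prob_space_distr[OF prob] X1 unfolding C1_rv_def by blast
    from prob_space.emeasure_space_1[OF this]
    show "emeasure (distr M1 C1_borel (\<lambda>\<omega>. restrict (X1 \<omega>) {0..1})) C1_space \<noteq> \<infinity>"
      by (simp add: space_C1_borel)
    show "emeasure (distr M1 C1_borel (\<lambda>\<omega>. restrict (X1 \<omega>) {0..1})) (cylinder ps)
        = emeasure (distr M2 C1_borel (\<lambda>\<omega>. restrict (X2 \<omega>) {0..1})) (cylinder ps)"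
      if "\<forall>p\<in>set ps. fst p \<in> {0..1}" for ps
      using emeasure_distr_cylinder_of_ae_eval_function[OF that X1 F1 \<Phi> rep1]
        emeasure_distr_cylinder_of_ae_eval_function[OF that X2 F2 \<Phi> rep2] eq by simp
  qed simp_all
  then show ?thesis unfolding C1_eqd_def using X1 X2 by simp
qed

lemma C1_borel_measurable_ginv_rel_arclen: "(\<lambda>g. ginv (rel_arclen g) v) \<in> borel_measurable C1_borel"
  using C1_borel_measurable_rel_arclen unit_rats_subset by (intro borel_measurable_ginv_param) auto

lemma C1_borel_measurable_eval_ginv_rel_arclen:
  "(\<lambda>g. g (ginv (rel_arclen g) u)) \<in> borel_measurable C1_borel"
  using C1_borel_measurable_ginv_rel_arclen ginv_range by (rule C1_borel_measurable_eval_at)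

locale shape_invariant_model = template \<xi> for \<xi> +
  fixes M :: "'a measure" and ash asc :: "'a \<Rightarrow> real" and h :: "'a \<Rightarrow> real \<Rightarrow> real"
    and \<mu>sh \<mu>sc :: real
  assumes prob: "prob_space M"
    and ash_borel: "ash \<in> borel_measurable M" and asc_borel: "asc \<in> borel_measurable M"
    and asc_nonzero: "measure M {\<omega>\<in>space M. asc \<omega> = 0} = 0"
    and ash_integrable: "integrable M ash" and asc_integrable: "integrable M asc"
    and ash_mean: "integral\<^sup>L M ash = \<mu>sh" and asc_mean: "integral\<^sup>L M asc = \<mu>sc"
    and warp_rv: "C1_rv M h"
    and warp_ae: "AE \<omega> in M. (\<forall>t\<in>{0..1}. C1_deriv (h \<omega>) t > 0) \<and> h \<omega> 0 = 0 \<and> h \<omega> 1 = 1"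
    and warp_inverse_mean: "\<forall>t\<in>{0..1}. integrable M (\<lambda>\<omega>. inv_into {0..1} (h \<omega>) t) \<and>
                   (\<integral>\<omega>. inv_into {0..1} (h \<omega>) t \<partial>M) = t"
    and curve_measurable: "(\<lambda>\<omega>. restrict (\<lambda>t. ash \<omega> + asc \<omega> * \<xi> (h \<omega> t)) {0..1}) \<in> M \<rightarrow>\<^sub>M C1_borel"
begin

abbreviation curve :: "'a \<Rightarrow> real \<Rightarrow> real" where
  "curve \<omega> \<equiv> restrict (\<lambda>t. ash \<omega> + asc \<omega> * \<xi> (h \<omega> t)) {0..1}"

lemma AE_warped_template: "AE \<omega> in M. warped_template (h \<omega>) \<xi> (asc \<omega>)"
proof -
  interpret prob_space M by (rule prob)
  have "{\<omega>\<in>space M. asc \<omega> = 0} \<in> sets M" using asc_borel by measurable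
  then have asc: "AE \<omega> in M. asc \<omega> \<noteq> 0"
    using asc_nonzero by (subst AE_iff_measurable) (auto simp: emeasure_eq_measure)
  have C1: "C1_on (h \<omega>)" if "\<omega> \<in> space M" for \<omega>
    using measurable_space[OF warp_rv[unfolded C1_rv_def] that] C1_on_cong(1)[of "restrict (h \<omega>) {0..1}" "h \<omega>"]
    by (simp add: space_C1_borel C1_space_imp_C1_on)
  from asc warp_ae AE_space show ?thesis
  proof eventually_elim
    case (elim \<omega>)
    then show ?case
      using C1[OF elim(3)] template_axioms
      by (auto simp: warped_template_def warping_function_def warped_template_axioms_def)
  qed
qed

lemma mean_ginv_rel_arclen_curve:
  assumes v: "v \<in> {0..1}"
  shows "(\<integral>\<omega>. ginv (rel_arclen (curve \<omega>)) v \<partial>M) = ginv (rel_arclen \<xi>) v"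
proof -
  have u: "ginv (rel_arclen \<xi>) v \<in> {0..1}" by (rule rel_arclen_ginv(1)[OF v])
  have "(\<integral>\<omega>. ginv (rel_arclen (curve \<omega>)) v \<partial>M) = (\<integral>\<omega>. inv_into {0..1} (h \<omega>) (ginv (rel_arclen \<xi>) v) \<partial>M)"
  proof (rule integral_cong_AE)
    show "(\<lambda>\<omega>. ginv (rel_arclen (curve \<omega>)) v) \<in> borel_measurable M"
      by (rule measurable_compose[OF curve_measurable C1_borel_measurable_ginv_rel_arclen])
    show "(\<lambda>\<omega>. inv_into {0..1} (h \<omega>) (ginv (rel_arclen \<xi>) v)) \<in> borel_measurable M"
      using warp_inverse_mean u by (blast intro: borel_measurable_integrable)
    show "AE \<omega> in M. ginv (rel_arclen (curve \<omega>)) v = inv_into {0..1} (h \<omega>) (ginv (rel_arclen \<xi>) v)"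
      using AE_warped_template by eventually_elim (rule warped_template.ginv_rel_arclen_warped[OF _ v])
  qed
  also have "\<dots> = ginv (rel_arclen \<xi>) v" using warp_inverse_mean u by blast
  finally show ?thesis .
qed

lemma AE_warping_recovered:
  "AE \<omega> in M. \<forall>t\<in>{0..1}. h \<omega> t = ginv (rel_arclen \<xi>) (rel_arclen (curve \<omega>) t)"
  using AE_warped_template
  by eventually_elim (simp add: warped_template.ginv_rel_arclen_recovers_warping)

lemma AE_curve_at_ginv:
  "AE \<omega> in M. \<forall>u\<in>{0..1}. curve \<omega> (ginv (rel_arclen (curve \<omega>)) u) = ash \<omega> + asc \<omega> * \<xi> (ginv (rel_arclen \<xi>) u)"
  using AE_warped_template
  by eventually_elim (use warped_template.warped_ginv_rel_arclen in blast)

lemma mean_curve_at_ginv: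
  assumes u: "u \<in> {0..1}"
  shows "(\<integral>\<omega>. curve \<omega> (ginv (rel_arclen (curve \<omega>)) u) \<partial>M) = \<mu>sh + \<mu>sc * \<xi> (ginv (rel_arclen \<xi>) u)"
proof -
  have "(\<integral>\<omega>. curve \<omega> (ginv (rel_arclen (curve \<omega>)) u) \<partial>M) = (\<integral>\<omega>. ash \<omega> + asc \<omega> * \<xi> (ginv (rel_arclen \<xi>) u) \<partial>M)"
  proof (rule integral_cong_AE)
    show "(\<lambda>\<omega>. curve \<omega> (ginv (rel_arclen (curve \<omega>)) u)) \<in> borel_measurable M"
      by (rule measurable_compose[OF curve_measurable C1_borel_measurable_eval_ginv_rel_arclen])
    show "(\<lambda>\<omega>. ash \<omega> + asc \<omega> * \<xi> (ginv (rel_arclen \<xi>) u)) \<in> borel_measurable M"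
      using ash_borel asc_borel by measurable
    show "AE \<omega> in M. curve \<omega> (ginv (rel_arclen (curve \<omega>)) u) = ash \<omega> + asc \<omega> * \<xi> (ginv (rel_arclen \<xi>) u)"
      using AE_curve_at_ginv by eventually_elim (use u in blast)
  qed
  also have "\<dots> = \<mu>sh + \<mu>sc * \<xi> (ginv (rel_arclen \<xi>) u)"
    using ash_integrable asc_integrable ash_mean asc_mean by simp
  finally show ?thesis .
qed

end

subsection \<open>Identifiability\<close>

locale shape_invariant_models_eqd =
  m1: shape_invariant_model \<xi>1 M1 ash1 asc1 h1 \<mu>sh \<mu>sc +
  m2: shape_invariant_model \<xi>2 M2 ash2 asc2 h2 \<mu>sh \<mu>sc
  for \<xi>1 M1 ash1 asc1 h1 \<xi>2 M2 ash2 asc2 h2 \<mu>sh \<mu>sc +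
  assumes scale_mean_nonzero: "\<mu>sc \<noteq> 0"
    and curves_eqd:
      "distr M1 C1_borel (\<lambda>\<omega>. restrict (\<lambda>t. ash1 \<omega> + asc1 \<omega> * \<xi>1 (h1 \<omega> t)) {0..1})
     = distr M2 C1_borel (\<lambda>\<omega>. restrict (\<lambda>t. ash2 \<omega> + asc2 \<omega> * \<xi>2 (h2 \<omega> t)) {0..1})"
begin

lemma integral_curves_eq:
  fixes G :: "(real \<Rightarrow> real) \<Rightarrow> real"
  assumes "G \<in> borel_measurable C1_borel"
  shows "(\<integral>\<omega>. G (m1.curve \<omega>) \<partial>M1) = (\<integral>\<omega>. G (m2.curve \<omega>) \<partial>M2)"
  using integral_eq_of_distr_eq[OF m1.curve_measurable m2.curve_measurable curves_eqd assms] .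

lemma ginv_rel_arclen_templates_eq: "ginv (rel_arclen \<xi>1) = ginv (rel_arclen \<xi>2)"
proof -
  have eq: "ginv (rel_arclen \<xi>1) v = ginv (rel_arclen \<xi>2) v" if "v \<in> {0..1}" for v
    using m1.mean_ginv_rel_arclen_curve[OF that] m2.mean_ginv_rel_arclen_curve[OF that]
      integral_curves_eq[OF C1_borel_measurable_ginv_rel_arclen] by simp
  have "rel_arclen \<xi>1 x = rel_arclen \<xi>2 x" if x: "x \<in> {0..1}" for x
    using eq[OF m1.rel_arclen_range[OF x]] m1.ginv_rel_arclen[OF x]
      m2.rel_arclen_ginv(2)[OF m1.rel_arclen_range[OF x]] by simp
  then show ?thesis using unit_rats_subset by (intro ginv_cong) auto
qed

lemma templates_eq:
  assumes x: "x \<in> {0..1}" shows "\<xi>1 x = \<xi>2 x"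
proof -
  let ?u = "rel_arclen \<xi>1 x"
  have u: "?u \<in> {0..1}" by (rule m1.rel_arclen_range[OF x])
  have "\<mu>sh + \<mu>sc * \<xi>1 (ginv (rel_arclen \<xi>1) ?u) = \<mu>sh + \<mu>sc * \<xi>2 (ginv (rel_arclen \<xi>2) ?u)"
    using m1.mean_curve_at_ginv[OF u] m2.mean_curve_at_ginv[OF u]
      integral_curves_eq[OF C1_borel_measurable_eval_ginv_rel_arclen] by metis
  moreover have "ginv (rel_arclen \<xi>1) ?u = x" "ginv (rel_arclen \<xi>2) ?u = x"
    using m1.ginv_rel_arclen[OF x] ginv_rel_arclen_templates_eq by auto
  ultimately show ?thesis using scale_mean_nonzero by simp
qed

lemma warpings_eqd: "C1_eqd M1 h1 M2 h2"
proof (rule C1_eqd_of_ae_eval_function[OF m1.prob m1.warp_rv m2.warp_rv m1.curve_measurable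
      m2.curve_measurable curves_eqd])
  show "(\<lambda>g. ginv (rel_arclen \<xi>1) (rel_arclen g t)) \<in> borel_measurable C1_borel" if "t \<in> {0..1}" for t
    using measurable_compose[OF C1_borel_measurable_rel_arclen[OF that] borel_measurable_ginv] .
  show "AE \<omega> in M1. \<forall>t\<in>{0..1}. h1 \<omega> t = ginv (rel_arclen \<xi>1) (rel_arclen (m1.curve \<omega>) t)"
    by (rule m1.AE_warping_recovered)
  show "AE \<omega> in M2. \<forall>t\<in>{0..1}. h2 \<omega> t = ginv (rel_arclen \<xi>1) (rel_arclen (m2.curve \<omega>) t)"
    using m2.AE_warping_recovered by (simp add: ginv_rel_arclen_templates_eq)
qed

text \<open>Two distinct template values \<open>\<xi>1 x0 \<noteq> \<xi>1 0\<close> are read off every aligned curve; the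
  amplitudes are the solution of the resulting linear system, a measurable function of the curve.\<close>

lemma amplitudes_distr_eq:
  "distr M1 borel (\<lambda>\<omega>. (ash1 \<omega>, asc1 \<omega>)) = distr M2 borel (\<lambda>\<omega>. (ash2 \<omega>, asc2 \<omega>))"
proof -
  obtain x0 where x0: "x0 \<in> {0..1}" "\<xi>1 x0 \<noteq> \<xi>1 0"
    using C1_on_nonconstant[OF m1.C1 m1.countable_critical] by blast
  define u0 where "u0 = rel_arclen \<xi>1 x0"
  have u0: "u0 \<in> {0..1}" "ginv (rel_arclen \<xi>1) u0 = x0" "ginv (rel_arclen \<xi>1) 0 = 0"
    unfolding u0_def using m1.rel_arclen_range m1.ginv_rel_arclen x0(1) m1.ginv_rel_arclen[of 0]
    by (auto simp: rel_arclen_def)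
  define F where "F u g = g (ginv (rel_arclen g) u)" for u and g :: "real \<Rightarrow> real"
  define \<Theta> where "\<Theta> g = (let s = (F u0 g - F 0 g) / (\<xi>1 x0 - \<xi>1 0) in (F 0 g - s * \<xi>1 0, s))" for g
  have [measurable]: "F u \<in> borel_measurable C1_borel" for u
    unfolding F_def by (rule C1_borel_measurable_eval_ginv_rel_arclen)
  have \<Theta>: "\<Theta> \<in> C1_borel \<rightarrow>\<^sub>M borel" unfolding \<Theta>_def Let_def by measurable
  have \<Theta>_eq: "\<Theta> g = (a, b)" if "F u0 g = a + b * \<xi>1 x0" "F 0 g = a + b * \<xi>1 0" for g a b
  proof -
    have "(F u0 g - F 0 g) / (\<xi>1 x0 - \<xi>1 0) = b" using that x0(2) by (simp add: field_simps)
    then show ?thesis unfolding \<Theta>_def using that by simp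
  qed
  have "AE \<omega> in M1. (ash1 \<omega>, asc1 \<omega>) = \<Theta> (m1.curve \<omega>)"
    using m1.AE_curve_at_ginv
    by eventually_elim (use u0 in \<open>auto intro!: \<Theta>_eq[symmetric] simp: F_def\<close>)
  moreover have "AE \<omega> in M2. (ash2 \<omega>, asc2 \<omega>) = \<Theta> (m2.curve \<omega>)"
    using m2.AE_curve_at_ginv
    by eventually_elim
      (use u0 x0 templates_eq in \<open>auto intro!: \<Theta>_eq[symmetric] simp: F_def ginv_rel_arclen_templates_eq\<close>)
  ultimately show ?thesis
    using m1.ash_borel m1.asc_borel m2.ash_borel m2.asc_borel
    by (intro distr_eq_of_ae_function[OF m1.curve_measurable m2.curve_measurable curves_eqd \<Theta>])
      (auto intro: measurable_Pair)
qed

end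

theorem corollary1:
  fixes M1 :: "'a measure" and M2 :: "'b measure"
    and \<xi>1 \<xi>2 :: "real \<Rightarrow> real"
    and ash1 asc1 :: "'a \<Rightarrow> real" and ash2 asc2 :: "'b \<Rightarrow> real"
    and h1 :: "'a \<Rightarrow> real \<Rightarrow> real" and h2 :: "'b \<Rightarrow> real \<Rightarrow> real"
    and \<mu>sh \<mu>sc :: real
  assumes P1: "prob_space M1" and P2: "prob_space M2"
    and xi1: "C1_on \<xi>1" "countable {t\<in>{0..1}. C1_deriv \<xi>1 t = 0}"
    and xi2: "C1_on \<xi>2" "countable {t\<in>{0..1}. C1_deriv \<xi>2 t = 0}"
    and a1_meas: "ash1 \<in> borel_measurable M1" "asc1 \<in> borel_measurable M1"
    and a2_meas: "ash2 \<in> borel_measurable M2" "asc2 \<in> borel_measurable M2"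
    and asc1_nz: "measure M1 {\<omega>\<in>space M1. asc1 \<omega> = 0} = 0"
    and asc2_nz: "measure M2 {\<omega>\<in>space M2. asc2 \<omega> = 0} = 0"
    and a1_int: "integrable M1 ash1" "integrable M1 asc1"
    and a2_int: "integrable M2 ash2" "integrable M2 asc2"
    and mean1: "integral\<^sup>L M1 ash1 = \<mu>sh" "integral\<^sup>L M1 asc1 = \<mu>sc"
    and mean2: "integral\<^sup>L M2 ash2 = \<mu>sh" "integral\<^sup>L M2 asc2 = \<mu>sc"
    and musc: "\<mu>sc \<noteq> 0"
    and h1_rv: "C1_rv M1 h1" and h2_rv: "C1_rv M2 h2"
    and h1_ae: "AE \<omega> in M1. (\<forall>t\<in>{0..1}. C1_deriv (h1 \<omega>) t > 0) \<and> h1 \<omega> 0 = 0 \<and> h1 \<omega> 1 = 1"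
    and h2_ae: "AE \<omega> in M2. (\<forall>t\<in>{0..1}. C1_deriv (h2 \<omega>) t > 0) \<and> h2 \<omega> 0 = 0 \<and> h2 \<omega> 1 = 1"
    and h1_inv: "\<forall>t\<in>{0..1}. integrable M1 (\<lambda>\<omega>. inv_into {0..1} (h1 \<omega>) t) \<and>
                   (\<integral>\<omega>. inv_into {0..1} (h1 \<omega>) t \<partial>M1) = t"
    and h2_inv: "\<forall>t\<in>{0..1}. integrable M2 (\<lambda>\<omega>. inv_into {0..1} (h2 \<omega>) t) \<and>
                   (\<integral>\<omega>. inv_into {0..1} (h2 \<omega>) t \<partial>M2) = t"
    and eqd: "C1_eqd M1 (\<lambda>\<omega>. (\<lambda>t. ash1 \<omega> + asc1 \<omega> * \<xi>1 t) \<circ> h1 \<omega>)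
                    M2 (\<lambda>\<omega>. (\<lambda>t. ash2 \<omega> + asc2 \<omega> * \<xi>2 t) \<circ> h2 \<omega>)"
  shows "C1_eqd M1 h1 M2 h2 \<and> (\<forall>t\<in>{0..1}. \<xi>1 t = \<xi>2 t) \<and>
         distr M1 borel (\<lambda>\<omega>. (ash1 \<omega>, asc1 \<omega>)) = distr M2 borel (\<lambda>\<omega>. (ash2 \<omega>, asc2 \<omega>))"
proof -
  have curves: "(\<lambda>\<omega>. restrict (\<lambda>t. ash1 \<omega> + asc1 \<omega> * \<xi>1 (h1 \<omega> t)) {0..1}) \<in> M1 \<rightarrow>\<^sub>M C1_borel"
    "(\<lambda>\<omega>. restrict (\<lambda>t. ash2 \<omega> + asc2 \<omega> * \<xi>2 (h2 \<omega> t)) {0..1}) \<in> M2 \<rightarrow>\<^sub>M C1_borel"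
    "distr M1 C1_borel (\<lambda>\<omega>. restrict (\<lambda>t. ash1 \<omega> + asc1 \<omega> * \<xi>1 (h1 \<omega> t)) {0..1})
   = distr M2 C1_borel (\<lambda>\<omega>. restrict (\<lambda>t. ash2 \<omega> + asc2 \<omega> * \<xi>2 (h2 \<omega> t)) {0..1})"
    using eqd unfolding C1_eqd_def C1_rv_def by (simp_all add: o_def)
  interpret shape_invariant_models_eqd \<xi>1 M1 ash1 asc1 h1 \<xi>2 M2 ash2 asc2 h2 \<mu>sh \<mu>sc
    by (intro shape_invariant_models_eqd.intro shape_invariant_model.intro template.intro
        shape_invariant_model_axioms.intro shape_invariant_models_eqd_axioms.intro)
      (fact P1 P2 xi1 xi2 a1_meas a2_meas asc1_nz asc2_nz a1_int a2_int mean1 mean2 musc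
        h1_rv h2_rv h1_ae h2_ae h1_inv h2_inv curves)+
  show ?thesis using warpings_eqd templates_eq amplitudes_distr_eq by blast
qed

end
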